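(* Let $N$ be a pWF net with a transition $t^*$, and let $N^*$ be the pWF net consisting of a single fresh place $p^*$ (no transitions, no edges, input and output set $\{p^*\}$), so that $\mathrm{tc}(N^* )$ is the tWF net $t_i\to p^*\to t_o$ with fresh transitions $t_i,t_o$. If $N$ is sub-sound, then $N\otimes_{t^*}\mathrm{tc}(N^* )$ is sub-sound.
   Context: Petri nets and markings. A Petri net is a triple $(P,T,F)$ with $P$ a finite set of places, $T$ a finite set of transitions, $P\cap T=\emptyset$, and $F\subseteq (P\times T)\cup(T\times P)$. For a node $x$, $\bullet x=\{y\mid (y,x)\in F\}$, $x\bullet=\{y\mid (x,y)\in F\}$. A marking is a multiset over $P$ (a function $P\to\mathbb N$); sets of places are identified with bags of multiplicity one, $+,-,\le$ are pointwise, and $k.m$ is the sum of $k$ copies of $m$. Transition $t$ is enabled at $m$ iff $\bullet t\le m$, firing gives $m-\bullet t+t\bullet$, and $m\xrightarrow{*}m'$ denotes reachability by a finite (possibly empty) firing sequence. Workflow nets. A pWF net is $(P,T,F,I,O)$ with $(P,T,F)$ a Petri net, $I,O\subseteq P$ non-empty, every node reachable by a directed path from some node of $I$, and some node of $O$ reachable from every node. A tWF net is the same with $I,O$ non-empty subsets of $T$. Input nodes may have incoming edges and output nodes outgoing edges. The transition-completion $\mathrm{tc}(N)$ of a pWF net $N=(P,T,F,I,O)$ is obtained by adding two fresh transitions $t_i,t_o$ with $t_i\bullet=I$, $\bullet t_i=\emptyset$, $\bullet t_o=O$, $t_o\bullet=\emptyset$, and taking input set $\{t_i\}$ and output set $\{t_o\}$.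 Sub-soundness. A pWF net is sub-sound if for all integers $k\ge k'\ge 0$ and every marking $m'$: if $k.I\xrightarrow{*}m'+k'.O$ then $m'\xrightarrow{*}(k-k').O$. Transition substitution. For a WF net $N=(P,T,F,I,O)$ and a tWF net $M=(P',T',F',I',O')$ with disjoint node sets and $t\in T$, $N\otimes_t M$ is obtained from $N$ by deleting $t$ and all edges incident to $t$, adding all nodes and edges of $M$, adding an edge $(q,t')$ for each $q\in\bullet_N t$ and $t'\in I'$, and an edge $(t',q)$ for each $t'\in O'$ and $q\in t\bullet_N$; its input set is $(I\setminus\{t\})\cup I'$ if $t\in I$ and $I$ otherwise, and its output set is $(O\setminus\{t\})\cup O'$ if $t\in O$ and $O$ otherwise. *)

theory Defs
  imports Main "HOL-Library.Multiset"
begin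

record 'a wf_net =
  places :: "'a set"
  trans  :: "'a set"
  flow   :: "('a \<times> 'a) set"
  inp    :: "'a set"
  outp   :: "'a set"

definition petri_net :: "'a wf_net \<Rightarrow> bool" where
  "petri_net N \<longleftrightarrow> finite (places N) \<and> finite (trans N) \<and>
     places N \<inter> trans N = {} \<and>
     flow N \<subseteq> (places N \<times> trans N) \<union> (trans N \<times> places N)"

definition preset :: "'a wf_net \<Rightarrow> 'a \<Rightarrow> 'a set" where
  "preset N x = {y. (y, x) \<in> flow N}"

definition postset :: "'a wf_net \<Rightarrow> 'a \<Rightarrow> 'a set" where
  "postset N x = {y. (x, y) \<in> flow N}"

definition wf_connected :: "'a wf_net \<Rightarrow> bool" where
  "wf_connected N \<longleftrightarrow>
     (\<forall>x \<in> places N \<union> trans N. \<exists>i \<in> inp N. (i, x) \<in> (flow N)\<^sup>*) \<and>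
     (\<forall>x \<in> places N \<union> trans N. \<exists>q \<in> outp N. (x, q) \<in> (flow N)\<^sup>*)"

definition pWF :: "'a wf_net \<Rightarrow> bool" where
  "pWF N \<longleftrightarrow> petri_net N \<and> inp N \<subseteq> places N \<and> inp N \<noteq> {} \<and>
     outp N \<subseteq> places N \<and> outp N \<noteq> {} \<and> wf_connected N"

definition tWF :: "'a wf_net \<Rightarrow> bool" where
  "tWF N \<longleftrightarrow> petri_net N \<and> inp N \<subseteq> trans N \<and> inp N \<noteq> {} \<and>
     outp N \<subseteq> trans N \<and> outp N \<noteq> {} \<and> wf_connected N"

text \<open>Markings are multisets of nodes; a set is identified with the bag of multiplicity one.\<close>
definition enabled :: "'a wf_net \<Rightarrow> 'a \<Rightarrow> 'a multiset \<Rightarrow> bool" where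
  "enabled N t m \<longleftrightarrow> t \<in> trans N \<and> mset_set (preset N t) \<subseteq># m"

definition fire :: "'a wf_net \<Rightarrow> 'a \<Rightarrow> 'a multiset \<Rightarrow> 'a multiset" where
  "fire N t m = m - mset_set (preset N t) + mset_set (postset N t)"

definition step :: "'a wf_net \<Rightarrow> 'a multiset \<Rightarrow> 'a multiset \<Rightarrow> bool" where
  "step N m m' \<longleftrightarrow> (\<exists>t. enabled N t m \<and> m' = fire N t m)"

definition reach :: "'a wf_net \<Rightarrow> 'a multiset \<Rightarrow> 'a multiset \<Rightarrow> bool" where
  "reach N = (step N)\<^sup>*\<^sup>*"

definition sub_sound :: "'a wf_net \<Rightarrow> bool" where
  "sub_sound N \<longleftrightarrow>
     (\<forall>k k' m'. k' \<le> k \<longrightarrow>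
        reach N (repeat_mset k (mset_set (inp N))) (m' + repeat_mset k' (mset_set (outp N))) \<longrightarrow>
        reach N m' (repeat_mset (k - k') (mset_set (outp N))))"

definition tc :: "'a wf_net \<Rightarrow> 'a \<Rightarrow> 'a \<Rightarrow> 'a wf_net" where
  "tc N ti to = \<lparr> places = places N, trans = trans N \<union> {ti, to},
     flow = flow N \<union> {(ti, i) | i. i \<in> inp N} \<union> {(q, to) | q. q \<in> outp N},
     inp = {ti}, outp = {to} \<rparr>"

definition tsubst :: "'a wf_net \<Rightarrow> 'a \<Rightarrow> 'a wf_net \<Rightarrow> 'a wf_net" where
  "tsubst N t M = \<lparr> places = places N \<union> places M,
     trans = (trans N - {t}) \<union> trans M,
     flow = {e \<in> flow N. fst e \<noteq> t \<and> snd e \<noteq> t} \<union> flow M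
            \<union> {(q, t') | q t'. q \<in> preset N t \<and> t' \<in> inp M}
            \<union> {(t', q) | t' q. t' \<in> outp M \<and> q \<in> postset N t},
     inp = (if t \<in> inp N then (inp N - {t}) \<union> inp M else inp N),
     outp = (if t \<in> outp N then (outp N - {t}) \<union> outp M else outp N) \<rparr>"

definition single_place_net :: "'a \<Rightarrow> 'a wf_net" where
  "single_place_net p = \<lparr> places = {p}, trans = {}, flow = {}, inp = {p}, outp = {p} \<rparr>"

end

theory Submission imports Defs begin

(* Write N' for N with t* replaced by the chain  ti -> p* -> to.  Every run
   of N' is mirrored in N by the map "collapse", which replaces each token on p* by the
   postset of t*: firing ti becomes firing t*, firing to becomes the empty run, and all
   other transitions stay unchanged.  Conversely every step of N is a run of N' (t* is
   simulated by ti followed by to), and every marking m reaches collapse m in N' by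
   firing to once per token on p*.  The input and output markings carry no token on p*,
   so collapse fixes them: a run  kI ->* m' + k'O  of N' collapses to
   kI ->* collapse m' + k'O  in N, sub-soundness of N yields  collapse m' ->* (k-k')O
   in N and hence in N', and  m' ->* collapse m'  in N' closes the argument. *)

lemma reach_refl: "reach N m m"
  unfolding reach_def by simp

lemma reach_step: "step N m m' \<Longrightarrow> reach N m m'"
  unfolding reach_def by simp

lemma reach_trans: "reach N a b \<Longrightarrow> reach N b c \<Longrightarrow> reach N a c"
  unfolding reach_def by (rule rtranclp_trans)

lemma reach_simulation:
  assumes sim: "\<And>a b. step M a b \<Longrightarrow> reach N (f a) (f b)"
    and run: "reach M a b"
  shows "reach N (f a) (f b)"
  using run unfolding reach_def
proof (induction rule: rtranclp_induct)
  case (step b c)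
  then show ?case using sim unfolding reach_def by (meson rtranclp_trans)
qed simp

text \<open>An additive map on multisets commutes with removing a sub-multiset; this is what
  lets the collapse map commute with firing.\<close>
lemma additive_map_diff:
  fixes h :: "'a multiset \<Rightarrow> 'b multiset"
  assumes add: "\<And>x y. h (x + y) = h x + h y" and sub: "A \<subseteq># m"
  shows "h (m - A) = h m - h A" and "h A \<subseteq># h m"
proof -
  have "h m = h (m - A) + h A"
    using add[of "m - A" A] sub by (simp add: subset_mset.diff_add)
  then show "h (m - A) = h m - h A" and "h A \<subseteq># h m" by simp_all
qed

locale refinement =
  fixes N :: "'a wf_net" and tstar ps ti to :: 'a
  assumes pwf: "pWF N" and tstar: "tstar \<in> trans N"
    and ps_fresh: "ps \<notin> places N \<union> trans N"
    and ti_fresh: "ti \<notin> places N \<union> trans N"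
    and to_fresh: "to \<notin> places N \<union> trans N"
    and distinct: "distinct [ps, ti, to]"
begin

definition N' :: "'a wf_net" where
  "N' = tsubst N tstar (tc (single_place_net ps) ti to)"

lemma petri: "petri_net N"
  using pwf unfolding pWF_def by simp

lemma flow_bipartite:
  "(x, y) \<in> flow N \<Longrightarrow> (x \<in> places N \<and> y \<in> trans N) \<or> (x \<in> trans N \<and> y \<in> places N)"
  using petri unfolding petri_net_def by auto

lemma places_trans_disjoint: "places N \<inter> trans N = {}"
  using petri unfolding petri_net_def by simp

lemma trans_N': "trans N' = trans N - {tstar} \<union> {ti, to}"
  unfolding N'_def tsubst_def tc_def single_place_net_def by auto

lemma preset_N'_old: "t \<in> trans N \<Longrightarrow> t \<noteq> tstar \<Longrightarrow> preset N' t = preset N t"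
  and postset_N'_old: "t \<in> trans N \<Longrightarrow> t \<noteq> tstar \<Longrightarrow> postset N' t = postset N t"
  and preset_N'_ti: "preset N' ti = preset N tstar"
  and postset_N'_ti: "postset N' ti = {ps}"
  and preset_N'_to: "preset N' to = {ps}"
  and postset_N'_to: "postset N' to = postset N tstar"
  unfolding N'_def tsubst_def tc_def single_place_net_def preset_def postset_def
  using flow_bipartite places_trans_disjoint ps_fresh ti_fresh to_fresh distinct tstar
  by auto

text \<open>t* is not a place, so the boundary of N is unchanged.\<close>
lemma inp_N': "inp N' = inp N" and outp_N': "outp N' = outp N"
  using pwf tstar places_trans_disjoint unfolding N'_def tsubst_def pWF_def by auto

lemma neighbours_in_net: "preset N t \<union> postset N t \<subseteq> places N \<union> trans N"
  unfolding preset_def postset_def using flow_bipartite by auto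

lemma neighbours_finite: "finite (preset N t)" "finite (postset N t)"
  using petri neighbours_in_net unfolding petri_net_def by (meson finite_Un finite_subset le_sup_iff)+

lemma ps_notin_neighbours:
  "ps \<notin># mset_set (preset N t)" "ps \<notin># mset_set (postset N t)"
  using neighbours_finite neighbours_in_net[of t] ps_fresh by auto

definition Post :: "'a multiset" where
  "Post = mset_set (postset N tstar)"

definition collapse :: "'a multiset \<Rightarrow> 'a multiset" where
  "collapse m = filter_mset (\<lambda>x. x \<noteq> ps) m + repeat_mset (count m ps) Post"

lemma collapse_add: "collapse (x + y) = collapse x + collapse y"
  unfolding collapse_def by (simp add: repeat_mset_distrib)

lemma collapse_fixed: "ps \<notin># x \<Longrightarrow> collapse x = x"
  unfolding collapse_def multiset_eq_iff by (auto simp: count_eq_zero_iff)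

lemma collapse_ps: "collapse {#ps#} = Post"
  unfolding collapse_def by simp

lemma collapse_diff:
  assumes "A \<subseteq># m"
  shows "collapse (m - A) = collapse m - collapse A" and "collapse A \<subseteq># collapse m"
  by (rule additive_map_diff[OF collapse_add assms])+

lemma collapse_fire:
  assumes "A \<subseteq># m"
  shows "collapse (m - A + B) = collapse m - collapse A + collapse B"
  by (simp only: collapse_add collapse_diff(1)[OF assms])

text \<open>Each step of N' collapses to a run of N of length at most one: ti becomes t*,
  to becomes the empty run, every other transition stays itself.\<close>
lemma step_N'_collapses:
  assumes "step N' a b"
  shows "reach N (collapse a) (collapse b)"
proof -
  obtain t where t: "t \<in> trans N'" and en: "mset_set (preset N' t) \<subseteq># a"
    and b: "b = a - mset_set (preset N' t) + mset_set (postset N' t)"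
    using assms unfolding step_def enabled_def fire_def by auto
  define A B where "A = mset_set (preset N' t)" and "B = mset_set (postset N' t)"
  have fired: "collapse b = collapse a - collapse A + collapse B"
    unfolding b A_def B_def by (rule collapse_fire[OF en])
  have enabled: "collapse A \<subseteq># collapse a"
    unfolding A_def by (rule collapse_diff(2)[OF en])
  consider "t = ti" | "t = to" | "t \<in> trans N" "t \<noteq> tstar"
    using t trans_N' by auto
  then show ?thesis
  proof cases
    case 1
    then have "collapse A = mset_set (preset N tstar)" "collapse B = Post"
      unfolding A_def B_def
      by (simp_all add: preset_N'_ti postset_N'_ti collapse_fixed ps_notin_neighbours collapse_ps)
    then have "enabled N tstar (collapse a) \<and> collapse b = fire N tstar (collapse a)"
      using fired enabled tstar unfolding enabled_def fire_def Post_def by simp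
    then show ?thesis by (intro reach_step) (auto simp: step_def)
  next
    case 2
    then have "collapse A = Post" "collapse B = Post"
      unfolding A_def B_def
      by (simp_all add: preset_N'_to postset_N'_to collapse_fixed ps_notin_neighbours collapse_ps Post_def)
    then have "collapse b = collapse a"
      using fired enabled by simp
    then show ?thesis by (simp add: reach_refl)
  next
    case 3
    then have "collapse A = mset_set (preset N t)" "collapse B = mset_set (postset N t)"
      unfolding A_def B_def preset_N'_old[OF 3] postset_N'_old[OF 3]
      by (simp_all add: collapse_fixed ps_notin_neighbours)
    then have "enabled N t (collapse a) \<and> collapse b = fire N t (collapse a)"
      using fired enabled 3 unfolding enabled_def fire_def by simp
    then show ?thesis by (intro reach_step) (auto simp: step_def)
  qed
qed

text \<open>Each step of N is a run of N': t* is replaced by ti followed by to.\<close>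
lemma step_N_in_N':
  assumes "step N a b"
  shows "reach N' a b"
proof -
  obtain t where t: "t \<in> trans N" and en: "mset_set (preset N t) \<subseteq># a"
    and b: "b = a - mset_set (preset N t) + mset_set (postset N t)"
    using assms unfolding step_def enabled_def fire_def by auto
  show ?thesis
  proof (cases "t = tstar")
    case True
    let ?mid = "a - mset_set (preset N tstar) + {#ps#}"
    have "step N' a ?mid"
      unfolding step_def enabled_def fire_def
      using en True trans_N' by (intro exI[of _ ti]) (simp add: preset_N'_ti postset_N'_ti)
    moreover have "step N' ?mid b"
      unfolding step_def enabled_def fire_def
      using b True trans_N' by (intro exI[of _ to]) (simp add: preset_N'_to postset_N'_to)
    ultimately show ?thesis by (blast intro: reach_step reach_trans)
  next
    case False
    have "step N' a b"
      unfolding step_def enabled_def fire_def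
      using t en b False trans_N' preset_N'_old[OF t False] postset_N'_old[OF t False]
      by (intro exI[of _ t]) simp
    then show ?thesis by (rule reach_step)
  qed
qed

lemma reach_N'_drain_ps:
  "reach N' (m + replicate_mset n ps) (m + repeat_mset n Post)"
proof (induction n arbitrary: m)
  case 0
  show ?case by (simp add: reach_refl)
next
  case (Suc n)
  have "step N' (m + replicate_mset (Suc n) ps) (m + Post + replicate_mset n ps)"
    unfolding step_def enabled_def fire_def
    using trans_N' by (intro exI[of _ to]) (simp add: preset_N'_to postset_N'_to Post_def)
  moreover have "reach N' (m + Post + replicate_mset n ps) (m + Post + repeat_mset n Post)"
    by (rule Suc.IH)
  ultimately have "reach N' (m + replicate_mset (Suc n) ps) (m + Post + repeat_mset n Post)"
    by (blast intro: reach_step reach_trans)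
  then show ?case by (simp add: algebra_simps)
qed

lemma reach_N'_collapse: "reach N' m (collapse m)"
proof -
  have "m = filter_mset (\<lambda>x. x \<noteq> ps) m + replicate_mset (count m ps) ps"
    unfolding multiset_eq_iff by auto
  then show ?thesis
    using reach_N'_drain_ps[of "filter_mset (\<lambda>x. x \<noteq> ps) m" "count m ps"]
    unfolding collapse_def by metis
qed

text \<open>Multiples of the input and output sets contain no p*-token, so collapse fixes them.\<close>
lemma collapse_boundary:
  "collapse (repeat_mset k (mset_set (inp N))) = repeat_mset k (mset_set (inp N))"
  "collapse (repeat_mset k (mset_set (outp N))) = repeat_mset k (mset_set (outp N))"
proof -
  have "inp N \<subseteq> places N" "outp N \<subseteq> places N" "finite (places N)"
    using pwf petri unfolding pWF_def petri_net_def by auto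
  then have "finite (inp N)" "finite (outp N)" "ps \<notin> inp N" "ps \<notin> outp N"
    using ps_fresh finite_subset by auto
  then have "ps \<notin># mset_set (inp N)" "ps \<notin># mset_set (outp N)"
    by simp_all
  then show "collapse (repeat_mset k (mset_set (inp N))) = repeat_mset k (mset_set (inp N))"
    "collapse (repeat_mset k (mset_set (outp N))) = repeat_mset k (mset_set (outp N))"
    by (metis collapse_fixed count_eq_zero_iff count_repeat_mset mult_0_right)+
qed

text \<open>The transfer argument: collapse the run into N, apply sub-soundness there, and
  come back to N' via the forward simulation and the draining of p*.\<close>
lemma sub_sound_N':
  assumes sound: "sub_sound N"
  shows "sub_sound N'"
  unfolding sub_sound_def inp_N' outp_N'
proof (intro allI impI)
  fix k k' m'
  let ?I = "repeat_mset k (mset_set (inp N))" and ?O = "\<lambda>j. repeat_mset j (mset_set (outp N))"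
  assume le: "k' \<le> k" and run: "reach N' ?I (m' + ?O k')"
  have "reach N (collapse ?I) (collapse (m' + ?O k'))"
    using reach_simulation[OF step_N'_collapses run] .
  then have "reach N ?I (collapse m' + ?O k')"
    by (simp add: collapse_add collapse_boundary)
  then have "reach N (collapse m') (?O (k - k'))"
    using sound le unfolding sub_sound_def by blast
  then have "reach N' (collapse m') (?O (k - k'))"
    using reach_simulation[of N N' id, OF step_N_in_N'] by simp
  then show "reach N' m' (?O (k - k'))"
    using reach_N'_collapse reach_trans by blast
qed

end

theorem mainTheorem10:
  fixes N :: "'a wf_net" and tstar ps ti to :: 'a
  assumes "pWF N"
    and "tstar \<in> trans N"
    and "ps \<notin> places N \<union> trans N"
    and "ti \<notin> places N \<union> trans N"
    and "to \<notin> places N \<union> trans N"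
    and "distinct [ps, ti, to]"
    and "sub_sound N"
  shows "sub_sound (tsubst N tstar (tc (single_place_net ps) ti to))"
proof -
  interpret refinement N tstar ps ti to
    using assms(1-6) by unfold_locales
  show ?thesis using sub_sound_N'[OF assms(7)] unfolding N'_def .
qed

end
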